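(* Let $v:[\underline s,\overline s]\times\mathbb R\to[0,1]$ be four-times differentiable, strictly increasing in $s$ (with $\partial v/\partial s>0$), and strictly decreasing in $r$. Say that Assumption 1 (swingy moderates) holds if $$\frac{\partial^2}{\partial s\,\partial r}\ln\!\left(\frac{\partial v(s,r)}{\partial s}\right)>0\quad\text{for all } s,r.$$ Then: (1) If $v(s,r)=Q(s-r)$ for all $(s,r)$, where $Q$ is the cdf of a taste shock with strictly positive, differentiable density $q$, then Assumption 1 holds if and only if $q$ is strictly log-concave, i.e. $\frac{d^2}{dt^2}\ln q(t)<0$ for all $t$. (2) Assumption 1 implies that, for each $r$, the function $s\mapsto \partial v(s,r)/\partial r$ is strictly single-dipped (first decreasing, then increasing) in $s$.
   Context: $v(s,r)$ is interpreted as the share of type-$s$ voters voting for the designer's party when the aggregate shock is $r$. *)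

theory Defs
  imports "HOL-Analysis.Analysis"
begin

fun n_times_differentiable_on ::
  "nat \<Rightarrow> ('a::real_normed_vector \<Rightarrow> 'b::real_normed_vector) \<Rightarrow> 'a set \<Rightarrow> bool" where
  "n_times_differentiable_on 0 f U = True"
| "n_times_differentiable_on (Suc n) f U =
     ((\<forall>x\<in>U. f differentiable (at x)) \<and>
      (\<forall>h. n_times_differentiable_on n (\<lambda>x. frechet_derivative f (at x) h) U))"

definition dv_ds :: "(real \<Rightarrow> real \<Rightarrow> real) \<Rightarrow> real \<Rightarrow> real \<Rightarrow> real" where
  "dv_ds v s r = deriv (\<lambda>s'. v s' r) s"

definition dv_dr :: "(real \<Rightarrow> real \<Rightarrow> real) \<Rightarrow> real \<Rightarrow> real \<Rightarrow> real" where
  "dv_dr v s r = deriv (\<lambda>r'. v s r') r"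

definition swingy_moderates :: "(real \<Rightarrow> real \<Rightarrow> real) \<Rightarrow> real \<Rightarrow> real \<Rightarrow> bool" where
  "swingy_moderates v lo hi \<longleftrightarrow>
     (\<forall>s\<in>{lo..hi}. \<forall>r.
        deriv (\<lambda>s'. deriv (\<lambda>r'. ln (dv_ds v s' r')) r) s > 0)"

definition strictly_single_dipped :: "(real \<Rightarrow> real) \<Rightarrow> real \<Rightarrow> real \<Rightarrow> bool" where
  "strictly_single_dipped f lo hi \<longleftrightarrow>
     (\<exists>m\<in>{lo..hi}.
        (\<forall>x\<in>{lo..m}. \<forall>y\<in>{lo..m}. x < y \<longrightarrow> f y < f x) \<and>
        (\<forall>x\<in>{m..hi}. \<forall>y\<in>{m..hi}. x < y \<longrightarrow> f x < f y))"

end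

(*
  Let H(s, r) be the r-derivative of ln v_s(s, r), i.e. v_sr / v_s; Assumption 1 says that H is
  strictly increasing in s.  By Schwarz's theorem the s-derivative of v_r is v_rs = v_sr = H * v_s,
  which, as v_s > 0, has the sign of H: negative below the point where H changes sign and positive
  above it.  Hence v_r is strictly single-dipped in s.

  If v(s, r) = Q(s - r), then v_s(s, r) = q(s - r), so H(s, r) = -(ln q)'(s - r) and
  dH/ds = -(ln q)''(s - r); as s - r ranges over all reals, Assumption 1 is equivalent to
  (ln q)'' < 0.  The second derivative of ln q exists because q(t) = v_s(lo, lo - t) inherits the
  smoothness of v.
*)

theory Submission
  imports Defs
begin

lemma has_real_derivative_reflect:
  assumes "(f has_real_derivative d) (at (c - x))"
  shows "((\<lambda>y. f (c - y)) has_real_derivative - d) (at x)"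
proof -
  have "((\<lambda>y. c - y) has_real_derivative -1) (at x)"
    by (auto intro!: derivative_eq_intros)
  from DERIV_chain2[OF assms this] show ?thesis
    by simp
qed

lemma has_real_derivative_unique_on_interval:
  fixes f g :: "real \<Rightarrow> real"
  assumes "lo < hi" "x \<in> {lo..hi}"
    and "(f has_real_derivative a) (at x)" "(g has_real_derivative b) (at x)"
    and "\<And>y. y \<in> {lo..hi} \<Longrightarrow> f y = g y"
  shows "a = b"
proof -
  have "(f has_real_derivative b) (at x within {lo..hi})"
    by (rule has_field_derivative_transform_within[OF _ zero_less_one assms(2)])
       (use has_field_derivative_at_within[OF assms(4)] assms(5) in auto)
  moreover have "(f has_real_derivative a) (at x within {lo..hi})"
    using has_field_derivative_at_within[OF assms(3)] .
  ultimately show ?thesis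
    using vector_derivative_unique_within_closed_interval[of lo hi x f a b] assms(1,2)
    by (simp add: has_real_derivative_iff_has_vector_derivative)
qed

lemma strict_mono_on_sign_change:
  fixes h :: "real \<Rightarrow> real"
  assumes "lo \<le> hi" "strict_mono_on {lo..hi} h"
  obtains m where "m \<in> {lo..hi}"
    "\<And>x. x \<in> {lo..hi} \<Longrightarrow> x < m \<Longrightarrow> h x < 0"
    "\<And>x. x \<in> {lo..hi} \<Longrightarrow> m < x \<Longrightarrow> h x > 0"
proof -
  define A where "A = insert lo {x \<in> {lo..hi}. h x < 0}"
  define m where "m = Sup A"
  have "bdd_above A"
    using assms(1) by (auto simp: A_def intro: bdd_aboveI[of _ hi])
  have "m \<in> {lo..hi}"
    using assms(1) \<open>bdd_above A\<close> unfolding m_def by (auto intro: cSup_upper cSup_least simp: A_def)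
  moreover have "h x < 0" if "x \<in> {lo..hi}" "x < m" for x
  proof -
    obtain a where "a \<in> A" "x < a"
      using \<open>x < m\<close> less_cSup_iff[OF _ \<open>bdd_above A\<close>] unfolding m_def A_def by blast
    with that have "a \<in> {lo..hi}" "h a < 0"
      by (auto simp: A_def)
    with that \<open>x < a\<close> show ?thesis
      using strict_mono_onD[OF assms(2)] by fastforce
  qed
  moreover have "h x > 0" if "x \<in> {lo..hi}" "m < x" for x
  proof -
    have "h y \<ge> 0" if "y \<in> {lo..hi}" "m < y" for y
      using that cSup_upper[OF _ \<open>bdd_above A\<close>, of y] by (force simp: A_def m_def)
    then have "h ((m + x) / 2) \<ge> 0"
      using \<open>m \<in> {lo..hi}\<close> that by simp
    moreover have "h ((m + x) / 2) < h x"
      using assms(2) \<open>m \<in> {lo..hi}\<close> that by (simp add: strict_mono_on_def)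
    ultimately show ?thesis
      by linarith
  qed
  ultimately show ?thesis
    using that by blast
qed

lemma strictly_single_dipped_if_deriv_factor:
  fixes g h p :: "real \<Rightarrow> real"
  assumes "lo \<le> hi" "strict_mono_on {lo..hi} h"
    and g': "\<And>x. x \<in> {lo..hi} \<Longrightarrow> (g has_real_derivative h x * p x) (at x)"
    and p: "\<And>x. x \<in> {lo..hi} \<Longrightarrow> p x > 0"
  shows "strictly_single_dipped g lo hi"
proof -
  obtain m where m: "m \<in> {lo..hi}"
    and neg: "\<And>x. x \<in> {lo..hi} \<Longrightarrow> x < m \<Longrightarrow> h x < 0"
    and pos: "\<And>x. x \<in> {lo..hi} \<Longrightarrow> m < x \<Longrightarrow> h x > 0"
    using strict_mono_on_sign_change[OF assms(1,2)] by blast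
  have cont: "continuous_on {x..y} g" if "lo \<le> x" "y \<le> hi" for x y
  proof (rule DERIV_atLeastAtMost_imp_continuous_on)
    show "\<exists>d. (g has_real_derivative d) (at z)" if "x \<le> z" "z \<le> y" for z
      using g'[of z] \<open>lo \<le> x\<close> \<open>y \<le> hi\<close> that by auto
  qed
  show ?thesis
    unfolding strictly_single_dipped_def
  proof (intro bexI[OF _ m] conjI ballI impI)
    fix x y assume xy: "x \<in> {lo..m}" "y \<in> {lo..m}" "x < y"
    show "g y < g x"
    proof (rule DERIV_neg_imp_decreasing_open[OF \<open>x < y\<close>])
      fix z assume "x < z" "z < y"
      with xy m have "z \<in> {lo..hi}" "z < m"
        by auto
      then show "\<exists>d. (g has_real_derivative d) (at z) \<and> d < 0"
        by (intro exI[of _ "h z * p z"] conjI g' mult_neg_pos neg p)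
    qed (use xy m in \<open>auto intro: cont\<close>)
  next
    fix x y assume xy: "x \<in> {m..hi}" "y \<in> {m..hi}" "x < y"
    show "g x < g y"
    proof (rule DERIV_pos_imp_increasing_open[OF \<open>x < y\<close>])
      fix z assume "x < z" "z < y"
      with xy m have "z \<in> {lo..hi}" "m < z"
        by auto
      then show "\<exists>d. (g has_real_derivative d) (at z) \<and> d > 0"
        by (intro exI[of _ "h z * p z"] conjI g' mult_pos_pos pos p)
    qed (use xy m in \<open>auto intro: cont\<close>)
  qed
qed

lemma has_real_derivative_partial_fst:
  fixes G :: "real \<times> real \<Rightarrow> real"
  assumes "G differentiable (at (x, y))"
  shows "((\<lambda>x'. G (x', y)) has_real_derivative frechet_derivative G (at (x, y)) (1, 0)) (at x)"
proof -
  let ?L = "frechet_derivative G (at (x, y))"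
  have G: "(G has_derivative ?L) (at (x, y))"
    using assms frechet_derivative_works by blast
  have "((\<lambda>x'. (x', y)) has_derivative (\<lambda>h. (h, 0))) (at x)"
    by (auto intro!: derivative_eq_intros)
  from has_derivative_compose[OF this, of G ?L] G
  have "((\<lambda>x'. G (x', y)) has_derivative (\<lambda>h. ?L (h, 0))) (at x)"
    by simp
  moreover have "(\<lambda>h. ?L (h, 0)) = (\<lambda>h. ?L (1, 0) * h)"
  proof
    fix h :: real
    show "?L (h, 0) = ?L (1, 0) * h"
      using linear_cmul[OF has_derivative_linear[OF G], of h "(1, 0)"] by (simp add: mult.commute)
  qed
  ultimately show ?thesis
    by (simp add: has_field_derivative_def)
qed

lemma has_real_derivative_partial_snd:
  fixes G :: "real \<times> real \<Rightarrow> real"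
  assumes "G differentiable (at (x, y))"
  shows "((\<lambda>y'. G (x, y')) has_real_derivative frechet_derivative G (at (x, y)) (0, 1)) (at y)"
proof -
  let ?L = "frechet_derivative G (at (x, y))"
  have G: "(G has_derivative ?L) (at (x, y))"
    using assms frechet_derivative_works by blast
  have "((\<lambda>y'. (x, y')) has_derivative (\<lambda>h. (0, h))) (at y)"
    by (auto intro!: derivative_eq_intros)
  from has_derivative_compose[OF this, of G ?L] G
  have "((\<lambda>y'. G (x, y')) has_derivative (\<lambda>h. ?L (0, h))) (at y)"
    by simp
  moreover have "(\<lambda>h. ?L (0, h)) = (\<lambda>h. ?L (0, 1) * h)"
  proof
    fix h :: real
    show "?L (0, h) = ?L (0, 1) * h"
      using linear_cmul[OF has_derivative_linear[OF G], of h "(0, 1)"] by (simp add: mult.commute)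
  qed
  ultimately show ?thesis
    by (simp add: has_field_derivative_def)
qed

lemma second_difference_mean_value:
  fixes F Fx Fxy :: "real \<times> real \<Rightarrow> real"
  assumes "a < a'" "b < b'"
    and Fx: "\<And>x y. x \<in> {a..a'} \<Longrightarrow> y \<in> {b..b'} \<Longrightarrow>
               ((\<lambda>x. F (x, y)) has_real_derivative Fx (x, y)) (at x)"
    and Fxy: "\<And>x y. x \<in> {a..a'} \<Longrightarrow> y \<in> {b..b'} \<Longrightarrow>
               ((\<lambda>y. Fx (x, y)) has_real_derivative Fxy (x, y)) (at y)"
  shows "\<exists>\<xi>\<in>{a<..<a'}. \<exists>\<eta>\<in>{b<..<b'}.
           F (a', b') - F (a', b) - F (a, b') + F (a, b) = (a' - a) * (b' - b) * Fxy (\<xi>, \<eta>)"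
proof -
  have "\<exists>\<xi>>a. \<xi> < a' \<and> (F (a', b') - F (a', b)) - (F (a, b') - F (a, b)) =
          (a' - a) * (Fx (\<xi>, b') - Fx (\<xi>, b))"
    by (rule MVT2[OF \<open>a < a'\<close>]) (use \<open>b < b'\<close> in \<open>auto intro!: DERIV_diff Fx\<close>)
  then obtain \<xi> where \<xi>: "a < \<xi>" "\<xi> < a'"
    and eq\<xi>: "(F (a', b') - F (a', b)) - (F (a, b') - F (a, b)) = (a' - a) * (Fx (\<xi>, b') - Fx (\<xi>, b))"
    by blast
  have "\<exists>\<eta>>b. \<eta> < b' \<and> Fx (\<xi>, b') - Fx (\<xi>, b) = (b' - b) * Fxy (\<xi>, \<eta>)"
    by (rule MVT2[OF \<open>b < b'\<close>]) (use \<xi> in \<open>auto intro!: Fxy\<close>)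
  then obtain \<eta> where "b < \<eta>" "\<eta> < b'" "Fx (\<xi>, b') - Fx (\<xi>, b) = (b' - b) * Fxy (\<xi>, \<eta>)"
    by blast
  with \<xi> eq\<xi> show ?thesis
    by (intro bexI[of _ \<xi>] bexI[of _ \<eta>]) (auto simp: algebra_simps)
qed

lemma mixed_partials_common_value:
  fixes F Fx Fy Fxy Fyx :: "real \<times> real \<Rightarrow> real"
  assumes "a < a'" "b < b'"
    and Fx: "\<And>x y. x \<in> {a..a'} \<Longrightarrow> y \<in> {b..b'} \<Longrightarrow>
               ((\<lambda>x. F (x, y)) has_real_derivative Fx (x, y)) (at x)"
    and Fy: "\<And>x y. x \<in> {a..a'} \<Longrightarrow> y \<in> {b..b'} \<Longrightarrow>
               ((\<lambda>y. F (x, y)) has_real_derivative Fy (x, y)) (at y)"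
    and Fxy: "\<And>x y. x \<in> {a..a'} \<Longrightarrow> y \<in> {b..b'} \<Longrightarrow>
               ((\<lambda>y. Fx (x, y)) has_real_derivative Fxy (x, y)) (at y)"
    and Fyx: "\<And>x y. x \<in> {a..a'} \<Longrightarrow> y \<in> {b..b'} \<Longrightarrow>
               ((\<lambda>x. Fy (x, y)) has_real_derivative Fyx (x, y)) (at x)"
  shows "\<exists>\<xi>\<in>{a<..<a'}. \<exists>\<eta>\<in>{b<..<b'}. \<exists>\<xi>'\<in>{a<..<a'}. \<exists>\<eta>'\<in>{b<..<b'}.
           Fxy (\<xi>, \<eta>) = Fyx (\<xi>', \<eta>')"
proof -
  obtain \<xi> \<eta> where "\<xi> \<in> {a<..<a'}" "\<eta> \<in> {b<..<b'}"
    and \<Delta>xy: "F (a', b') - F (a', b) - F (a, b') + F (a, b) = (a' - a) * (b' - b) * Fxy (\<xi>, \<eta>)"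
    using second_difference_mean_value[of a a' b b' F Fx Fxy] assms by blast
  obtain \<eta>' \<xi>' where "\<eta>' \<in> {b<..<b'}" "\<xi>' \<in> {a<..<a'}"
    and \<Delta>yx: "F (a', b') - F (a, b') - F (a', b) + F (a, b) = (b' - b) * (a' - a) * Fyx (\<xi>', \<eta>')"
    using second_difference_mean_value[of b b' a a' "\<lambda>(y, x). F (x, y)"
        "\<lambda>(y, x). Fy (x, y)" "\<lambda>(y, x). Fyx (x, y)"] assms
    by auto
  have "(a' - a) * (b' - b) * Fxy (\<xi>, \<eta>) = (a' - a) * (b' - b) * Fyx (\<xi>', \<eta>')"
    using \<Delta>xy \<Delta>yx by (simp add: algebra_simps)
  then have "Fxy (\<xi>, \<eta>) = Fyx (\<xi>', \<eta>')"
    using assms(1,2) by simp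
  with \<open>\<xi> \<in> _\<close> \<open>\<eta> \<in> _\<close> \<open>\<xi>' \<in> _\<close> \<open>\<eta>' \<in> _\<close> show ?thesis
    by blast
qed

lemma mixed_partials_eq:
  fixes F Fx Fy Fxy Fyx :: "real \<times> real \<Rightarrow> real"
  assumes "open U" "(a, b) \<in> U"
    and Fx: "\<And>x y. (x, y) \<in> U \<Longrightarrow> ((\<lambda>x. F (x, y)) has_real_derivative Fx (x, y)) (at x)"
    and Fy: "\<And>x y. (x, y) \<in> U \<Longrightarrow> ((\<lambda>y. F (x, y)) has_real_derivative Fy (x, y)) (at y)"
    and Fxy: "\<And>x y. (x, y) \<in> U \<Longrightarrow> ((\<lambda>y. Fx (x, y)) has_real_derivative Fxy (x, y)) (at y)"
    and Fyx: "\<And>x y. (x, y) \<in> U \<Longrightarrow> ((\<lambda>x. Fy (x, y)) has_real_derivative Fyx (x, y)) (at x)"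
    and "continuous (at (a, b)) Fxy" "continuous (at (a, b)) Fyx"
  shows "Fxy (a, b) = Fyx (a, b)"
proof (rule ccontr)
  assume "Fxy (a, b) \<noteq> Fyx (a, b)"
  define \<epsilon> where "\<epsilon> = \<bar>Fxy (a, b) - Fyx (a, b)\<bar> / 2"
  have "\<epsilon> > 0"
    using \<open>Fxy (a, b) \<noteq> Fyx (a, b)\<close> by (simp add: \<epsilon>_def)
  obtain e where "e > 0" "ball (a, b) e \<subseteq> U"
    using assms(1,2) open_contains_ball by blast
  obtain dxy where "dxy > 0" "\<And>z. dist z (a, b) < dxy \<Longrightarrow> dist (Fxy z) (Fxy (a, b)) < \<epsilon>"
    using assms(7) \<open>\<epsilon> > 0\<close> unfolding continuous_at_eps_delta by blast
  obtain dyx where "dyx > 0" "\<And>z. dist z (a, b) < dyx \<Longrightarrow> dist (Fyx z) (Fyx (a, b)) < \<epsilon>"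
    using assms(8) \<open>\<epsilon> > 0\<close> unfolding continuous_at_eps_delta by blast
  define t where "t = min e (min dxy dyx) / 3"
  have "t > 0"
    using \<open>e > 0\<close> \<open>dxy > 0\<close> \<open>dyx > 0\<close> by (simp add: t_def)
  have near: "(x, y) \<in> U \<and> dist (Fxy (x, y)) (Fxy (a, b)) < \<epsilon> \<and> dist (Fyx (x, y)) (Fyx (a, b)) < \<epsilon>"
    if "x \<in> {a..a + t}" "y \<in> {b..b + t}" for x y
  proof -
    have "dist (x, y) (a, b) \<le> \<bar>x - a\<bar> + \<bar>y - b\<bar>"
      using sqrt_sum_squares_le_sum_abs[of "x - a" "y - b"] by (simp add: dist_Pair_Pair dist_real_def)
    also have "\<dots> < min e (min dxy dyx)"
      using that \<open>t > 0\<close> by (auto simp: t_def)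
    finally show ?thesis
      using \<open>ball (a, b) e \<subseteq> U\<close> \<open>dist (x, y) (a, b) < dxy \<Longrightarrow> _\<close> \<open>dist (x, y) (a, b) < dyx \<Longrightarrow> _\<close>
      by (auto simp: dist_commute)
  qed
  obtain \<xi> \<eta> \<xi>' \<eta>' where "\<xi> \<in> {a<..<a + t}" "\<eta> \<in> {b<..<b + t}" "\<xi>' \<in> {a<..<a + t}" "\<eta>' \<in> {b<..<b + t}"
    and "Fxy (\<xi>, \<eta>) = Fyx (\<xi>', \<eta>')"
    using mixed_partials_common_value[of a "a + t" b "b + t" F Fx Fy Fxy Fyx] \<open>t > 0\<close> near Fx Fy Fxy Fyx
    by auto
  moreover have "dist (Fxy (\<xi>, \<eta>)) (Fxy (a, b)) < \<epsilon>" "dist (Fyx (\<xi>', \<eta>')) (Fyx (a, b)) < \<epsilon>"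
    using near calculation(1-4) by auto
  ultimately show False
    by (simp add: \<epsilon>_def dist_real_def abs_if split: if_splits)
qed

lemma n_times_differentiable_on_imp_differentiable:
  "n_times_differentiable_on (Suc n) f U \<Longrightarrow> x \<in> U \<Longrightarrow> f differentiable (at x)"
  by simp

lemma n_times_differentiable_on_cong:
  assumes "open U" "\<And>x. x \<in> U \<Longrightarrow> f x = g x"
  shows "n_times_differentiable_on n f U \<longleftrightarrow> n_times_differentiable_on n g U"
  using assms(2)
proof (induction n arbitrary: f g)
  case (Suc n)
  have same_derivative: "(f has_derivative D) (at x) \<longleftrightarrow> (g has_derivative D) (at x)"
    if "x \<in> U" for x D
  proof
    show "(g has_derivative D) (at x)" if "(f has_derivative D) (at x)"
      by (rule has_derivative_transform_within_open[OF that \<open>open U\<close> \<open>x \<in> U\<close>]) (simp add: Suc.prems)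
    show "(f has_derivative D) (at x)" if "(g has_derivative D) (at x)"
      by (rule has_derivative_transform_within_open[OF that \<open>open U\<close> \<open>x \<in> U\<close>]) (simp add: Suc.prems)
  qed
  have "f differentiable (at x) \<longleftrightarrow> g differentiable (at x)" if "x \<in> U" for x
    using same_derivative[OF that] by (simp add: differentiable_def)
  moreover have "n_times_differentiable_on n (\<lambda>x. frechet_derivative f (at x) h) U \<longleftrightarrow>
                 n_times_differentiable_on n (\<lambda>x. frechet_derivative g (at x) h) U" for h
    by (rule Suc.IH) (simp add: frechet_derivative_def same_derivative)
  ultimately show ?case
    by simp
qed simp

lemma has_real_derivative_dv_ds:
  assumes "(\<lambda>(s, r). v s r) differentiable (at (s, r))"
  shows "((\<lambda>s'. v s' r) has_real_derivative dv_ds v s r) (at s)"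
    and "dv_ds v s r = frechet_derivative (\<lambda>(s, r). v s r) (at (s, r)) (1, 0)"
  using has_real_derivative_partial_fst[OF assms] by (simp_all add: dv_ds_def DERIV_imp_deriv)

lemma has_real_derivative_dv_dr:
  assumes "(\<lambda>(s, r). v s r) differentiable (at (s, r))"
  shows "((\<lambda>r'. v s r') has_real_derivative dv_dr v s r) (at r)"
    and "dv_dr v s r = frechet_derivative (\<lambda>(s, r). v s r) (at (s, r)) (0, 1)"
  using has_real_derivative_partial_snd[OF assms] by (simp_all add: dv_dr_def DERIV_imp_deriv)

lemma n_times_differentiable_on_dv_ds:
  assumes "open U" "n_times_differentiable_on (Suc n) (\<lambda>(s, r). v s r) U"
  shows "n_times_differentiable_on n (\<lambda>(s, r). dv_ds v s r) U"
proof -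
  have "(\<lambda>(s, r). dv_ds v s r) z = frechet_derivative (\<lambda>(s, r). v s r) (at z) (1, 0)" if "z \<in> U" for z
    using has_real_derivative_dv_ds(2) n_times_differentiable_on_imp_differentiable[OF assms(2) that]
    by (cases z) simp
  then show ?thesis
    using assms(2) by (subst n_times_differentiable_on_cong[OF assms(1)]) auto
qed

lemma n_times_differentiable_on_dv_dr:
  assumes "open U" "n_times_differentiable_on (Suc n) (\<lambda>(s, r). v s r) U"
  shows "n_times_differentiable_on n (\<lambda>(s, r). dv_dr v s r) U"
proof -
  have "(\<lambda>(s, r). dv_dr v s r) z = frechet_derivative (\<lambda>(s, r). v s r) (at z) (0, 1)" if "z \<in> U" for z
    using has_real_derivative_dv_dr(2) n_times_differentiable_on_imp_differentiable[OF assms(2) that]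
    by (cases z) simp
  then show ?thesis
    using assms(2) by (subst n_times_differentiable_on_cong[OF assms(1)]) auto
qed

lemma dv_ds_dv_dr_commute:
  assumes "open U" and v: "n_times_differentiable_on (Suc (Suc (Suc n))) (\<lambda>(s, r). v s r) U"
    and "(s, r) \<in> U"
  shows "dv_ds (dv_dr v) s r = dv_dr (dv_ds v) s r"
proof -
  note diff = n_times_differentiable_on_imp_differentiable
  have vs: "n_times_differentiable_on (Suc (Suc n)) (\<lambda>(s, r). dv_ds v s r) U"
    and vr: "n_times_differentiable_on (Suc (Suc n)) (\<lambda>(s, r). dv_dr v s r) U"
    by (fact n_times_differentiable_on_dv_ds[OF assms(1) v] n_times_differentiable_on_dv_dr[OF assms(1) v])+
  have vsr: "n_times_differentiable_on (Suc n) (\<lambda>(s, r). dv_dr (dv_ds v) s r) U"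
    and vrs: "n_times_differentiable_on (Suc n) (\<lambda>(s, r). dv_ds (dv_dr v) s r) U"
    by (fact n_times_differentiable_on_dv_dr[OF assms(1) vs] n_times_differentiable_on_dv_ds[OF assms(1) vr])+
  have "(\<lambda>(s, r). dv_dr (dv_ds v) s r) (s, r) = (\<lambda>(s, r). dv_ds (dv_dr v) s r) (s, r)"
  proof (rule mixed_partials_eq[OF assms(1,3), where F = "\<lambda>(s, r). v s r"
        and Fx = "\<lambda>(s, r). dv_ds v s r" and Fy = "\<lambda>(s, r). dv_dr v s r"])
    fix x y assume xy: "(x, y) \<in> U"
    show "((\<lambda>x. (\<lambda>(s, r). v s r) (x, y)) has_real_derivative (\<lambda>(s, r). dv_ds v s r) (x, y)) (at x)"
      and "((\<lambda>y. (\<lambda>(s, r). v s r) (x, y)) has_real_derivative (\<lambda>(s, r). dv_dr v s r) (x, y)) (at y)"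
      using has_real_derivative_dv_ds(1) has_real_derivative_dv_dr(1) diff[OF v xy] by simp_all
    show "((\<lambda>y. (\<lambda>(s, r). dv_ds v s r) (x, y)) has_real_derivative
              (\<lambda>(s, r). dv_dr (dv_ds v) s r) (x, y)) (at y)"
      using has_real_derivative_dv_dr(1) diff[OF vs xy] by simp
    show "((\<lambda>x. (\<lambda>(s, r). dv_dr v s r) (x, y)) has_real_derivative
              (\<lambda>(s, r). dv_ds (dv_dr v) s r) (x, y)) (at x)"
      using has_real_derivative_dv_ds(1) diff[OF vr xy] by simp
  next
    show "continuous (at (s, r)) (\<lambda>(s, r). dv_dr (dv_ds v) s r)"
      and "continuous (at (s, r)) (\<lambda>(s, r). dv_ds (dv_dr v) s r)"
      using diff[OF vsr assms(3)] diff[OF vrs assms(3)] by (simp_all add: differentiable_imp_continuous_within)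
  qed
  then show ?thesis
    by simp
qed

definition log_dv_ds_dr :: "(real \<Rightarrow> real \<Rightarrow> real) \<Rightarrow> real \<Rightarrow> real \<Rightarrow> real" where
  "log_dv_ds_dr v s r = deriv (\<lambda>r'. ln (dv_ds v s r')) r"

lemma swingy_moderates_iff:
  "swingy_moderates v lo hi \<longleftrightarrow> (\<forall>s\<in>{lo..hi}. \<forall>r. deriv (\<lambda>s'. log_dv_ds_dr v s' r) s > 0)"
  by (simp add: swingy_moderates_def log_dv_ds_dr_def)

lemma log_dv_ds_dr_eq:
  assumes "(\<lambda>(s, r). dv_ds v s r) differentiable (at (s, r))" "dv_ds v s r > 0"
  shows "log_dv_ds_dr v s r = dv_dr (dv_ds v) s r / dv_ds v s r"
  unfolding log_dv_ds_dr_def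
  by (rule DERIV_imp_deriv)
     (use has_real_derivative_dv_dr(1)[OF assms(1)] assms(2) in \<open>auto intro!: derivative_eq_intros\<close>)

lemma log_dv_ds_dr_differentiable:
  assumes "open U" and v: "n_times_differentiable_on (Suc (Suc (Suc n))) (\<lambda>(s, r). v s r) U"
    and "(s, r) \<in> U" "dv_ds v s r > 0"
  shows "(\<lambda>s'. log_dv_ds_dr v s' r) differentiable (at s)"
proof -
  have vs: "n_times_differentiable_on (Suc (Suc n)) (\<lambda>(s, r). dv_ds v s r) U"
    by (fact n_times_differentiable_on_dv_ds[OF assms(1) v])
  have vsr: "n_times_differentiable_on (Suc n) (\<lambda>(s, r). dv_dr (dv_ds v) s r) U"
    by (fact n_times_differentiable_on_dv_dr[OF assms(1) vs])
  note diff = n_times_differentiable_on_imp_differentiable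
  have "isCont (\<lambda>s'. dv_ds v s' r) s"
    using has_real_derivative_dv_ds(1)[OF diff[OF vs assms(3)]] by (rule DERIV_isCont)
  then have "((\<lambda>s'. dv_ds v s' r) \<longlongrightarrow> dv_ds v s r) (nhds s)"
    using tendsto_at_iff_tendsto_nhds[of "\<lambda>s'. dv_ds v s' r" s] by (simp add: isCont_def)
  then have "\<forall>\<^sub>F s' in nhds s. dv_ds v s' r > 0"
    using assms(4) by (rule order_tendstoD(1))
  moreover have "open ((\<lambda>s'. (s', r)) -` U)"
    by (rule open_vimage[OF assms(1)]) (intro continuous_intros)
  then have "\<forall>\<^sub>F s' in nhds s. (s', r) \<in> U"
    using eventually_nhds_in_open assms(3) by fastforce
  ultimately have near: "\<forall>\<^sub>F s' in nhds s.
      dv_dr (dv_ds v) s' r / dv_ds v s' r = log_dv_ds_dr v s' r"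
    by eventually_elim (simp add: log_dv_ds_dr_eq diff[OF vs])
  obtain d where "((\<lambda>s'. dv_dr (dv_ds v) s' r / dv_ds v s' r) has_real_derivative d) (at s)"
    using DERIV_divide[OF has_real_derivative_dv_ds(1)[OF diff[OF vsr assms(3)]]
        has_real_derivative_dv_ds(1)[OF diff[OF vs assms(3)]]] assms(4) by fastforce
  then have "((\<lambda>s'. log_dv_ds_dr v s' r) has_real_derivative d) (at s)"
    using DERIV_cong_ev[OF refl near refl] by blast
  then show ?thesis
    using real_differentiable_def by blast
qed

lemma swingy_moderates_imp_strictly_single_dipped:
  assumes "lo \<le> hi" "open U" "{lo..hi} \<times> UNIV \<subseteq> U"
    and v: "n_times_differentiable_on (Suc (Suc (Suc n))) (\<lambda>(s, r). v s r) U"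
    and dv_ds_pos: "\<forall>s\<in>{lo..hi}. \<forall>r. dv_ds v s r > 0"
    and "swingy_moderates v lo hi"
  shows "strictly_single_dipped (\<lambda>s. dv_dr v s r) lo hi"
proof (rule strictly_single_dipped_if_deriv_factor[OF assms(1),
      where h = "\<lambda>s. log_dv_ds_dr v s r" and p = "\<lambda>s. dv_ds v s r"])
  have inU: "(s, r) \<in> U" if "s \<in> {lo..hi}" for s
    using assms(3) that by auto
  have vs: "n_times_differentiable_on (Suc (Suc n)) (\<lambda>(s, r). dv_ds v s r) U"
    and vr: "n_times_differentiable_on (Suc (Suc n)) (\<lambda>(s, r). dv_dr v s r) U"
    by (fact n_times_differentiable_on_dv_ds[OF assms(2) v] n_times_differentiable_on_dv_dr[OF assms(2) v])+
  note diff = n_times_differentiable_on_imp_differentiable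
  show "strict_mono_on {lo..hi} (\<lambda>s. log_dv_ds_dr v s r)"
  proof (rule strict_mono_onI)
    fix x y assume "x \<in> {lo..hi}" "y \<in> {lo..hi}" "x < y"
    show "log_dv_ds_dr v x r < log_dv_ds_dr v y r"
    proof (rule DERIV_pos_imp_increasing[OF \<open>x < y\<close>])
      fix z assume "x \<le> z" "z \<le> y"
      with \<open>x \<in> {lo..hi}\<close> \<open>y \<in> {lo..hi}\<close> have z: "z \<in> {lo..hi}"
        by auto
      have "((\<lambda>s. log_dv_ds_dr v s r) has_real_derivative deriv (\<lambda>s. log_dv_ds_dr v s r) z) (at z)"
        using log_dv_ds_dr_differentiable[OF assms(2,4) inU[OF z]] dv_ds_pos z
        by (simp add: DERIV_deriv_iff_real_differentiable)
      moreover have "deriv (\<lambda>s. log_dv_ds_dr v s r) z > 0"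
        using \<open>swingy_moderates v lo hi\<close> z by (simp add: swingy_moderates_iff)
      ultimately show "\<exists>d. ((\<lambda>s. log_dv_ds_dr v s r) has_real_derivative d) (at z) \<and> d > 0"
        by blast
    qed
  qed
  show "((\<lambda>s. dv_dr v s r) has_real_derivative log_dv_ds_dr v s r * dv_ds v s r) (at s)"
    if "s \<in> {lo..hi}" for s
  proof -
    have "dv_ds (dv_dr v) s r = dv_dr (dv_ds v) s r"
      using dv_ds_dv_dr_commute[OF assms(2,4) inU[OF that]] .
    also have "\<dots> = log_dv_ds_dr v s r * dv_ds v s r"
    proof -
      have "dv_ds v s r > 0"
        using dv_ds_pos that by blast
      then show ?thesis
        using log_dv_ds_dr_eq[OF diff[OF vs inU[OF that]]] by simp
    qed
    finally show ?thesis
      using has_real_derivative_dv_ds(1)[OF diff[OF vr inU[OF that]]] by simp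
  qed
  show "dv_ds v s r > 0" if "s \<in> {lo..hi}" for s
    using dv_ds_pos that by blast
qed

lemma dv_ds_eq_density:
  assumes "lo < hi" "s \<in> {lo..hi}" "(\<lambda>(s, r). v s r) differentiable (at (s, r))"
    and Q: "\<And>t. (Q has_real_derivative q t) (at t)"
    and v_eq: "\<forall>s\<in>{lo..hi}. \<forall>r. v s r = Q (s - r)"
  shows "dv_ds v s r = q (s - r)"
proof (rule has_real_derivative_unique_on_interval[OF assms(1,2)])
  show "((\<lambda>s. v s r) has_real_derivative dv_ds v s r) (at s)"
    using has_real_derivative_dv_ds(1)[OF assms(3)] .
  show "((\<lambda>s. Q (s - r)) has_real_derivative q (s - r)) (at s)"
    using DERIV_shift[of Q "q (s - r)" s "- r"] Q by simp
qed (use v_eq in auto)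

lemma log_dv_ds_dr_eq_density:
  assumes "\<And>r. dv_ds v s r = q (s - r)" "\<And>t. q t > 0" "\<And>t. q differentiable (at t)"
  shows "log_dv_ds_dr v s r = - deriv (\<lambda>t. ln (q t)) (s - r)"
proof -
  have "((\<lambda>t. ln (q t)) has_real_derivative deriv q t / q t) (at t)" for t
    using assms(2,3) by (auto intro!: derivative_eq_intros simp: DERIV_deriv_iff_real_differentiable)
  then have "((\<lambda>t. ln (q t)) has_real_derivative deriv (\<lambda>t. ln (q t)) t) (at t)" for t
    by (metis DERIV_imp_deriv)
  then show ?thesis
    unfolding log_dv_ds_dr_def assms(1) by (intro DERIV_imp_deriv has_real_derivative_reflect)
qed

lemma log_density_deriv_differentiable:
  assumes "open U" and v: "n_times_differentiable_on (Suc (Suc (Suc n))) (\<lambda>(s, r). v s r) U"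
    and "\<And>r. (s, r) \<in> U" and q_eq: "\<And>t. q t = dv_ds v s (s - t)" and q_pos: "\<And>t. q t > 0"
  shows "deriv (\<lambda>t. ln (q t)) differentiable (at t)"
proof -
  have vs: "n_times_differentiable_on (Suc (Suc n)) (\<lambda>(s, r). dv_ds v s r) U"
    by (fact n_times_differentiable_on_dv_ds[OF assms(1) v])
  have vsr: "n_times_differentiable_on (Suc n) (\<lambda>(s, r). dv_dr (dv_ds v) s r) U"
    by (fact n_times_differentiable_on_dv_dr[OF assms(1) vs])
  note diff = n_times_differentiable_on_imp_differentiable
  have dq: "(q has_real_derivative - dv_dr (dv_ds v) s (s - t)) (at t)" for t
    unfolding q_eq[abs_def] by (rule has_real_derivative_reflect has_real_derivative_dv_dr diff[OF vs] assms(3))+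
  then have "deriv q = (\<lambda>t. - dv_dr (dv_ds v) s (s - t))"
    by (simp add: DERIV_imp_deriv fun_eq_iff)
  then have "deriv q differentiable (at t)" for t
    using DERIV_minus[OF has_real_derivative_reflect[OF has_real_derivative_dv_dr(1)[OF diff[OF vsr assms(3)]]]]
    unfolding real_differentiable_def by auto
  moreover have "((\<lambda>t. ln (q t)) has_real_derivative deriv q t / q t) (at t)" for t
    using dq q_pos by (auto intro!: derivative_eq_intros simp: DERIV_imp_deriv[OF dq])
  then have "deriv (\<lambda>t. ln (q t)) = (\<lambda>t. deriv q t / q t)"
    by (intro ext DERIV_imp_deriv)
  moreover have "q differentiable (at t)"
    using dq real_differentiable_def by blast
  ultimately show ?thesis
    using q_pos[of t] by simp
qed

lemma swingy_moderates_iff_strictly_log_concave: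
  fixes Q q :: "real \<Rightarrow> real"
  assumes "lo < hi" "open U" "{lo..hi} \<times> UNIV \<subseteq> U"
    and v: "n_times_differentiable_on (Suc (Suc (Suc n))) (\<lambda>(s, r). v s r) U"
    and Q: "\<And>t. (Q has_real_derivative q t) (at t)"
    and q_pos: "\<And>t. q t > 0" and q_diff: "\<And>t. q differentiable (at t)"
    and v_eq: "\<forall>s\<in>{lo..hi}. \<forall>r. v s r = Q (s - r)"
  shows "swingy_moderates v lo hi \<longleftrightarrow> (\<forall>t. deriv (deriv (\<lambda>t'. ln (q t'))) t < 0)"
proof -
  define L where "L = deriv (\<lambda>t. ln (q t))"
  have inU: "(s, r) \<in> U" if "s \<in> {lo..hi}" for s r
    using assms(3) that by auto
  have dv_ds_eq: "dv_ds v s r = q (s - r)" if "s \<in> {lo..hi}" for s r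
    using dv_ds_eq_density[OF assms(1) that _ Q v_eq] v inU[OF that] by simp
  have "lo \<in> {lo..hi}"
    using assms(1) by simp
  then have "q t = dv_ds v lo (lo - t)" for t
    using dv_ds_eq by simp
  then have dL: "(L has_real_derivative deriv L t) (at t)" for t
    unfolding L_def DERIV_deriv_iff_real_differentiable
    by (rule log_density_deriv_differentiable[OF assms(2) v inU[OF \<open>lo \<in> _\<close>] _ q_pos])
  have dlog: "deriv (\<lambda>s. log_dv_ds_dr v s r) s = - deriv L (s - r)" if "s \<in> {lo..hi}" for s r
  proof (rule has_real_derivative_unique_on_interval[OF assms(1) that])
    show "((\<lambda>s. log_dv_ds_dr v s r) has_real_derivative deriv (\<lambda>s. log_dv_ds_dr v s r) s) (at s)"
      using log_dv_ds_dr_differentiable[OF assms(2) v inU[OF that]] q_pos dv_ds_eq[OF that]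
      by (simp add: DERIV_deriv_iff_real_differentiable)
    show "((\<lambda>s. - L (s - r)) has_real_derivative - deriv L (s - r)) (at s)"
      using DERIV_shift[of L _ s "- r"] dL by (auto intro!: derivative_intros)
    show "log_dv_ds_dr v s' r = - L (s' - r)" if "s' \<in> {lo..hi}" for s'
      unfolding L_def using log_dv_ds_dr_eq_density dv_ds_eq[OF that] q_pos q_diff by blast
  qed
  show ?thesis
    unfolding swingy_moderates_iff L_def[symmetric]
  proof
    assume "\<forall>s\<in>{lo..hi}. \<forall>r. deriv (\<lambda>s. log_dv_ds_dr v s r) s > 0"
    then have "deriv (\<lambda>s. log_dv_ds_dr v s (lo - t)) lo > 0" for t
      using \<open>lo \<in> _\<close> by blast
    then show "\<forall>t. deriv L t < 0"
      using dlog[OF \<open>lo \<in> _\<close>] by simp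
  qed (use dlog in auto)
qed

theorem proposition5:
  fixes v :: "real \<Rightarrow> real \<Rightarrow> real" and lo hi :: real and U :: "(real \<times> real) set"
  assumes lohi: "lo < hi"
    and U_open: "open U" and U_dom: "{lo..hi} \<times> UNIV \<subseteq> U"
    and v_diff4: "n_times_differentiable_on 4 (\<lambda>(s, r). v s r) U"
    and v_range: "\<forall>s\<in>{lo..hi}. \<forall>r. 0 \<le> v s r \<and> v s r \<le> 1"
    and v_incr_s: "\<forall>r. \<forall>s1\<in>{lo..hi}. \<forall>s2\<in>{lo..hi}. s1 < s2 \<longrightarrow> v s1 r < v s2 r"
    and v_s_pos: "\<forall>s\<in>{lo..hi}. \<forall>r. dv_ds v s r > 0"
    and v_decr_r: "\<forall>s\<in>{lo..hi}. \<forall>r1 r2. r1 < r2 \<longrightarrow> v s r2 < v s r1"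
  shows "(\<forall>Q q :: real \<Rightarrow> real.
            ((\<forall>t. (Q has_real_derivative q t) (at t)) \<and>
             (Q \<longlongrightarrow> 0) at_bot \<and> (Q \<longlongrightarrow> 1) at_top \<and>
             (\<forall>t. q t > 0) \<and> (\<forall>t. q differentiable (at t)) \<and>
             (\<forall>s\<in>{lo..hi}. \<forall>r. v s r = Q (s - r)))
            \<longrightarrow> (swingy_moderates v lo hi \<longleftrightarrow>
                 (\<forall>t. deriv (deriv (\<lambda>t'. ln (q t'))) t < 0))) \<and>
         (swingy_moderates v lo hi \<longrightarrow>
           (\<forall>r. strictly_single_dipped (\<lambda>s. dv_dr v s r) lo hi))"
proof -
  have v_diff: "n_times_differentiable_on (Suc (Suc (Suc (Suc 0)))) (\<lambda>(s, r). v s r) U"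
    using v_diff4 by (simp add: numeral_eq_Suc del: n_times_differentiable_on.simps)
  show ?thesis
    using swingy_moderates_iff_strictly_log_concave[OF lohi U_open U_dom v_diff]
      swingy_moderates_imp_strictly_single_dipped[OF less_imp_le[OF lohi] U_open U_dom v_diff v_s_pos]
    by blast
qed

end
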